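(* Consider two ILP models for a problem whose solutions are hop-constrained trees, which have the same linear objective function $f(x)$ and the same additional linear constraints $C$, where both $f$ and $C$ involve only the $x$-variables, and which differ only in the hop-constrained tree constraints: the assignment model optimizes $f$ over integral $(x,y)\in\mathcal{A}$ with $x$ satisfying $C$, and the partial-ordering model optimizes $f$ over integral $(x,l,g)\in\mathcal{P}$ with $x$ satisfying $C$. Then the partial-ordering model is stronger than the assignment model: if the problem is a minimization problem, its LP relaxation value is at least that of the assignment model on every instance, and if it is a maximization problem, it is at most that of the assignment model on every instance.
   Context: Setting: $V$ is the node set of a complete undirected graph, $r\in V$ a root, $H\ge1$ a hop limit. A hop-constrained tree is a tree rooted at $r$ in which every node has at most $H$ edges on its path to $r$. For every ordered pair $(u,v)$ of distinct nodes there is a real variable $x_{u,v}$. Common constraints: (X1) $\sum_{u\neq v}x_{u,v}\le1$ for all $v\in V$; (X2) $\sum_{u\in V\setminus\{v,w\}}x_{u,v}\ge x_{v,w}$ for all $v\in V\setminus\{r\}$, $w\neq v$; (X3) $0\le x_{u,v}\le1$. $\mathcal{P}$: all $(x,l,g)$ (with $l_{v,i},g_{i,v}$ for $v\in V$, $i=0,\dots,H$) satisfying (X1)–(X3) and $l_{r,0}=g_{0,r}=0$; $l_{v,1}=g_{H,v}=0$ for $v\neq r$; $l_{v,i}\le l_{v,i+1}$ and $g_{i,v}+l_{v,i+1}=1$ for $v\in V$, $i=0,\dots,H-1$; $l_{u,i}+g_{i,v}\ge x_{u,v}$ for $u\neq v$, $i=0,\dots,H$; $0\le l,g\le1$. $\mathcal{A}$: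 all $(x,y)$ (with $y_{v,i}$ for $v\in V$, $i=0,\dots,H$) satisfying (X1)–(X3) and $y_{r,0}=1$; $y_{r,i}=0$ for $i\ge1$; $y_{v,0}=0$ and $\sum_{i=1}^Hy_{v,i}=1$ for $v\neq r$; $y_{u,i}-y_{v,i+1}+x_{u,v}\le1$ for $u\neq v$, $i=0,\dots,H-1$; $y_{u,H}+x_{u,v}\le1$ for $u\neq v$; $0\le y\le1$. The LP relaxation value of an ILP is the optimum of the same objective over the corresponding polytope (integrality dropped). *)

theory Defs
  imports "HOL-Analysis.Analysis"
begin

text \<open>Variables: x u v for ordered pairs of distinct nodes of V; l v i, g i v, y v i for
 v in V and i in 0..H.  Values outside these index ranges are unconstrained and irrelevant.\<close>

definition x_cons :: "'a set \<Rightarrow> 'a \<Rightarrow> ('a \<Rightarrow> 'a \<Rightarrow> real) \<Rightarrow> bool" where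
  "x_cons V r x \<longleftrightarrow>
     (\<forall>v\<in>V. (\<Sum>u\<in>V - {v}. x u v) \<le> 1) \<and>
     (\<forall>v\<in>V - {r}. \<forall>w\<in>V - {v}. (\<Sum>u\<in>V - {v, w}. x u v) \<ge> x v w) \<and>
     (\<forall>u\<in>V. \<forall>v\<in>V. u \<noteq> v \<longrightarrow> 0 \<le> x u v \<and> x u v \<le> 1)"

definition poly_P :: "'a set \<Rightarrow> 'a \<Rightarrow> nat \<Rightarrow>
    (('a \<Rightarrow> 'a \<Rightarrow> real) \<times> ('a \<Rightarrow> nat \<Rightarrow> real) \<times> (nat \<Rightarrow> 'a \<Rightarrow> real)) set" where
  "poly_P V r H = {(x, l, g). x_cons V r x \<and>
     l r 0 = 0 \<and> g 0 r = 0 \<and>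
     (\<forall>v\<in>V - {r}. l v 1 = 0 \<and> g H v = 0) \<and>
     (\<forall>v\<in>V. \<forall>i<H. l v i \<le> l v (i + 1) \<and> g i v + l v (i + 1) = 1) \<and>
     (\<forall>u\<in>V. \<forall>v\<in>V. u \<noteq> v \<longrightarrow> (\<forall>i\<le>H. l u i + g i v \<ge> x u v)) \<and>
     (\<forall>v\<in>V. \<forall>i\<le>H. 0 \<le> l v i \<and> l v i \<le> 1 \<and> 0 \<le> g i v \<and> g i v \<le> 1)}"

definition poly_A :: "'a set \<Rightarrow> 'a \<Rightarrow> nat \<Rightarrow>
    (('a \<Rightarrow> 'a \<Rightarrow> real) \<times> ('a \<Rightarrow> nat \<Rightarrow> real)) set" where
  "poly_A V r H = {(x, y). x_cons V r x \<and>
     y r 0 = 1 \<and> (\<forall>i\<in>{1..H}. y r i = 0) \<and>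
     (\<forall>v\<in>V - {r}. y v 0 = 0 \<and> (\<Sum>i=1..H. y v i) = 1) \<and>
     (\<forall>u\<in>V. \<forall>v\<in>V. u \<noteq> v \<longrightarrow>
        (\<forall>i<H. y u i - y v (i + 1) + x u v \<le> 1) \<and> y u H + x u v \<le> 1) \<and>
     (\<forall>v\<in>V. \<forall>i\<le>H. 0 \<le> y v i \<and> y v i \<le> 1)}"

definition lin_x :: "'a set \<Rightarrow> ('a \<Rightarrow> 'a \<Rightarrow> real) \<Rightarrow> ('a \<Rightarrow> 'a \<Rightarrow> real) \<Rightarrow> real" where
  "lin_x V c x = (\<Sum>(u, v) \<in> {(u, v). u \<in> V \<and> v \<in> V \<and> u \<noteq> v}. c u v * x u v)"

text \<open>Additional linear constraints C: a set of pairs (a, b) each meaning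
  lin_x V a x \<le> b (equalities / \<ge>-constraints are expressed by such pairs).\<close>
definition sat_C :: "'a set \<Rightarrow> (('a \<Rightarrow> 'a \<Rightarrow> real) \<times> real) set \<Rightarrow> ('a \<Rightarrow> 'a \<Rightarrow> real) \<Rightarrow> bool" where
  "sat_C V C x \<longleftrightarrow> (\<forall>(a, b)\<in>C. lin_x V a x \<le> b)"

text \<open>LP relaxation values (in extended reals: infeasible min = +\<infinity>, infeasible max = -\<infinity>).\<close>
definition lp_min_P where
  "lp_min_P V r H c C = (INF p \<in> {p \<in> poly_P V r H. sat_C V C (fst p)}. ereal (lin_x V c (fst p)))"
definition lp_max_P where
  "lp_max_P V r H c C = (SUP p \<in> {p \<in> poly_P V r H. sat_C V C (fst p)}. ereal (lin_x V c (fst p)))"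
definition lp_min_A where
  "lp_min_A V r H c C = (INF p \<in> {p \<in> poly_A V r H. sat_C V C (fst p)}. ereal (lin_x V c (fst p)))"
definition lp_max_A where
  "lp_max_A V r H c C = (SUP p \<in> {p \<in> poly_A V r H. sat_C V C (fst p)}. ereal (lin_x V c (fst p)))"

end

theory Submission
  imports Defs
begin

text \<open>
  Every point \<open>(x, l, g)\<close> of \<open>\<P>\<close> lifts to a point \<open>(x, y)\<close> of \<open>\<A>\<close>, so the relaxation over \<open>\<P>\<close>
  optimises over fewer \<open>x\<close> than the one over \<open>\<A>\<close>. The lift is a greedy layering: a seed \<open>z\<close> is
  placed at depth 1, and each deeper layer of a node \<open>v\<close> receives exactly the least mass that the
  constraints \<open>y u i - y v (i + 1) + x u v \<le> 1\<close> demand. Brouwer's theorem chooses the seed as a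
  fixed point of \<open>z \<mapsto> 1 - (mass of the deeper layers)\<close>, so every node gets total mass 1.
  As the in-degrees \<open>\<Sum>u. x u v\<close> are at most 1, the total demand on \<open>v\<close> is at most
  \<open>1 - x r v\<close>, which gives \<open>z v \<ge> x r v\<close>. The ordering variables matter only at the last
  depth: the tails \<open>1 - l v (k + 1)\<close> satisfy the same demand inequalities, hence dominate the
  greedy layers, and \<open>x u v \<le> l u H\<close> then yields \<open>y u H + x u v \<le> 1\<close>.
\<close>

definition unit_cube :: "'a set \<Rightarrow> ('a \<Rightarrow> real) set" where
  "unit_cube N = {z. (\<forall>i\<in>N. 0 \<le> z i \<and> z i \<le> 1) \<and> (\<forall>i. i \<notin> N \<longrightarrow> z i = 0)}"

lemma unit_cube_eq_PiE: "unit_cube N = PiE UNIV (\<lambda>i. if i \<in> N then {0..1} else {0})"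
  by (auto simp: unit_cube_def PiE_iff split: if_splits)

lemma compact_unit_cube: "compact (unit_cube N)"
proof -
  have "compactin (product_topology (\<lambda>_. euclidean) UNIV) (unit_cube N)"
    unfolding unit_cube_eq_PiE by (subst compactin_PiE) auto
  then show ?thesis by (simp add: euclidean_product_topology)
qed

lemma continuous_on_coordinatewise_lipschitz:
  fixes h :: "('a \<Rightarrow> real) \<Rightarrow> real"
  assumes "finite N" and "0 \<le> C"
    and lip: "\<And>z w \<delta>. z \<in> K \<Longrightarrow> w \<in> K \<Longrightarrow> (\<forall>j\<in>N. \<bar>z j - w j\<bar> \<le> \<delta>) \<Longrightarrow> \<bar>h z - h w\<bar> \<le> C * \<delta>"
  shows "continuous_on K h"
  unfolding continuous_on_topological
proof (intro ballI allI impI)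
  fix z B assume z: "z \<in> K" and B: "open B" "h z \<in> B"
  obtain e where e: "e > 0" "ball (h z) e \<subseteq> B" using B openE by blast
  define \<eta> where "\<eta> = e / (C + 1)"
  have "\<eta> > 0" using e \<open>0 \<le> C\<close> by (simp add: \<eta>_def)
  define A where "A = {w. \<forall>j\<in>N. w j \<in> ball (z j) \<eta>}"
  have "open A" unfolding A_def by (rule product_topology_basis') (auto simp: \<open>finite N\<close>)
  moreover have "z \<in> A" using \<open>\<eta> > 0\<close> by (simp add: A_def)
  moreover have "h w \<in> B" if "w \<in> K" "w \<in> A" for w
  proof -
    have "\<forall>j\<in>N. \<bar>w j - z j\<bar> \<le> \<eta>"
      using \<open>w \<in> A\<close> by (auto simp: A_def dist_real_def abs_minus_commute less_imp_le)
    then have "\<bar>h w - h z\<bar> \<le> C * \<eta>" using lip \<open>w \<in> K\<close> z by blast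
    also have "\<dots> < e" using e \<open>0 \<le> C\<close> by (simp add: \<eta>_def field_simps)
    finally show ?thesis using e by (auto simp: dist_real_def abs_minus_commute)
  qed
  ultimately show "\<exists>A. open A \<and> z \<in> A \<and> (\<forall>w\<in>K. w \<in> A \<longrightarrow> h w \<in> B)" by blast
qed

lemma fixpoint_defect_le:
  fixes a b fa fb z fz d e :: real
  assumes "a \<le> fa" "fb \<le> b" "\<bar>a - z\<bar> \<le> e" "\<bar>b - z\<bar> \<le> e" "\<bar>fa - fz\<bar> \<le> d" "\<bar>fb - fz\<bar> \<le> d"
  shows "\<bar>fz - z\<bar> \<le> d + e"
  using assms by (simp add: abs_le_iff algebra_simps)

definition cube_grid :: "'a set \<Rightarrow> ('a \<Rightarrow> nat) \<Rightarrow> nat \<Rightarrow> (nat \<Rightarrow> nat) \<Rightarrow> 'a \<Rightarrow> real" where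
  "cube_grid N e p q i = (if i \<in> N then real (q (e i)) / p else 0)"

lemma cube_grid_in_unit_cube:
  "0 < p \<Longrightarrow> (\<And>i. i \<in> N \<Longrightarrow> q (e i) \<le> p) \<Longrightarrow> cube_grid N e p q \<in> unit_cube N"
  by (auto simp: unit_cube_def cube_grid_def)

lemma cube_grid_neighbour:
  assumes "q (e i) \<le> r (e i)" and "r (e i) \<le> q (e i) + 1" and "0 < p"
  shows "\<bar>cube_grid N e p r i - cube_grid N e p q i\<bar> \<le> 1 / p"
proof -
  have "\<bar>real (r (e i)) - real (q (e i))\<bar> \<le> 1" using assms(1,2) by linarith
  then show ?thesis
    using \<open>0 < p\<close> by (simp add: cube_grid_def diff_divide_distrib[symmetric] divide_right_mono)
qed

lemma kuhn_unit_cube: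
  fixes P :: "('a \<Rightarrow> real) \<Rightarrow> 'a \<Rightarrow> bool" and p :: nat
  assumes "finite N" and "0 < p"
    and lower: "\<And>z i. z \<in> unit_cube N \<Longrightarrow> i \<in> N \<Longrightarrow> z i = 0 \<Longrightarrow> P z i"
    and upper: "\<And>z i. z \<in> unit_cube N \<Longrightarrow> i \<in> N \<Longrightarrow> z i = 1 \<Longrightarrow> \<not> P z i"
  shows "\<exists>z\<in>unit_cube N. \<forall>i\<in>N. \<exists>a\<in>unit_cube N. \<exists>c\<in>unit_cube N.
           (\<forall>j\<in>N. \<bar>a j - z j\<bar> \<le> 1 / p) \<and> (\<forall>j\<in>N. \<bar>c j - z j\<bar> \<le> 1 / p) \<and> P a i \<and> \<not> P c i"
proof -
  define n where "n = card N"
  obtain b where b: "bij_betw b {..<n} N"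
    using ex_bij_betw_nat_finite[OF \<open>finite N\<close>] by (auto simp: n_def atLeast0LessThan)
  define b' where "b' = inv_into {..<n} b"
  have b'_less: "b' i < n" and b_b': "b (b' i) = i" if "i \<in> N" for i
    using b that by (auto simp: b'_def bij_betw_def inv_into_into f_inv_into_f)
  have b'_b: "b' (b k) = k" and b_in: "b k \<in> N" if "k < n" for k
    using b that by (auto simp: b'_def bij_betw_def inv_into_f_f)
  define grid where "grid = cube_grid N b' p"
  have grid_in: "grid q \<in> unit_cube N" if "\<forall>k<n. q k \<le> p" for q
    using that b'_less \<open>0 < p\<close> by (auto simp: grid_def intro: cube_grid_in_unit_cube)
  define label where "label q k = (if P (grid q) (b k) then 0 else 1::nat)" for q k
  have "\<forall>q. (\<forall>k<n. q k \<le> p) \<longrightarrow> (\<forall>k<n. label q k = 0 \<or> label q k = 1)"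
    by (simp add: label_def)
  moreover have "\<forall>q. (\<forall>k<n. q k \<le> p) \<longrightarrow> (\<forall>k<n. q k = 0 \<longrightarrow> label q k = 0)"
    using lower grid_in b_in b'_b by (simp add: label_def grid_def cube_grid_def)
  moreover have "\<forall>q. (\<forall>k<n. q k \<le> p) \<longrightarrow> (\<forall>k<n. q k = p \<longrightarrow> label q k = 1)"
    using upper grid_in b_in b'_b \<open>0 < p\<close> by (simp add: label_def grid_def cube_grid_def)
  ultimately obtain q where q: "\<forall>k<n. q k < p"
    and cell: "\<forall>k<n. \<exists>r s. (\<forall>j<n. q j \<le> r j \<and> r j \<le> q j + 1) \<and>
                            (\<forall>j<n. q j \<le> s j \<and> s j \<le> q j + 1) \<and> label r k \<noteq> label s k"
    by (rule kuhn_lemma[OF \<open>0 < p\<close>])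
  have near: "grid r \<in> unit_cube N \<and> (\<forall>j\<in>N. \<bar>grid r j - grid q j\<bar> \<le> 1 / p)"
    if "\<forall>j<n. q j \<le> r j \<and> r j \<le> q j + 1" for r
    using that q b'_less \<open>0 < p\<close>
    by (auto simp: grid_def Suc_le_eq intro!: grid_in[unfolded grid_def] cube_grid_neighbour
             intro: le_trans)
  have "\<exists>a\<in>unit_cube N. \<exists>c\<in>unit_cube N. (\<forall>j\<in>N. \<bar>a j - grid q j\<bar> \<le> 1 / p) \<and>
          (\<forall>j\<in>N. \<bar>c j - grid q j\<bar> \<le> 1 / p) \<and> P a i \<and> \<not> P c i" if i: "i \<in> N" for i
  proof -
    obtain r s where r: "\<forall>j<n. q j \<le> r j \<and> r j \<le> q j + 1" and s: "\<forall>j<n. q j \<le> s j \<and> s j \<le> q j + 1"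
      and "label r (b' i) \<noteq> label s (b' i)"
      using cell b'_less[OF i] by blast
    then have "P (grid r) i \<noteq> P (grid s) i"
      by (auto simp: label_def b_b'[OF i] split: if_splits)
    then show ?thesis
      using near[OF r] near[OF s] by (cases "P (grid r) i") blast+
  qed
  moreover have "grid q \<in> unit_cube N" using near[of q] by simp
  ultimately show ?thesis by blast
qed

lemma approx_fixpoint_unit_cube:
  fixes f :: "('a \<Rightarrow> real) \<Rightarrow> 'a \<Rightarrow> real" and p :: nat
  assumes "finite N" and "0 < p"
    and into: "\<And>z. z \<in> unit_cube N \<Longrightarrow> \<forall>i\<in>N. 0 \<le> f z i \<and> f z i \<le> 1"
    and lip: "\<And>z w \<delta> i. z \<in> unit_cube N \<Longrightarrow> w \<in> unit_cube N \<Longrightarrow>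
                (\<forall>j\<in>N. \<bar>z j - w j\<bar> \<le> \<delta>) \<Longrightarrow> i \<in> N \<Longrightarrow> \<bar>f z i - f w i\<bar> \<le> L * \<delta>"
  shows "\<exists>z\<in>unit_cube N. \<forall>i\<in>N. \<bar>f z i - z i\<bar> \<le> (L + 1) / p"
proof -
  txt \<open>Near a cell where coordinate \<open>i\<close> is moved both up and down by \<open>f\<close>, it is almost fixed.\<close>
  obtain z where z: "z \<in> unit_cube N"
    and cell: "\<forall>i\<in>N. \<exists>a\<in>unit_cube N. \<exists>c\<in>unit_cube N.
                 (\<forall>j\<in>N. \<bar>a j - z j\<bar> \<le> 1 / p) \<and> (\<forall>j\<in>N. \<bar>c j - z j\<bar> \<le> 1 / p) \<and>
                 (a i \<le> f a i \<and> a i \<noteq> 1) \<and> \<not> (c i \<le> f c i \<and> c i \<noteq> 1)"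
    using kuhn_unit_cube[OF \<open>finite N\<close> \<open>0 < p\<close>, of "\<lambda>z i. z i \<le> f z i \<and> z i \<noteq> 1"] into
    by (fastforce simp: unit_cube_def)
  have "\<bar>f z i - z i\<bar> \<le> L / p + 1 / p" if i: "i \<in> N" for i
  proof -
    obtain a c where ac: "a \<in> unit_cube N" "c \<in> unit_cube N"
      and near: "\<forall>j\<in>N. \<bar>a j - z j\<bar> \<le> 1 / p" "\<forall>j\<in>N. \<bar>c j - z j\<bar> \<le> 1 / p"
      and "a i \<le> f a i" and "\<not> (c i \<le> f c i \<and> c i \<noteq> 1)"
      using cell i by blast
    moreover have "f c i \<le> 1" using into[OF ac(2)] i by blast
    ultimately have "f c i \<le> c i" by auto
    moreover have "\<bar>f a i - f z i\<bar> \<le> L / p" "\<bar>f c i - f z i\<bar> \<le> L / p"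
      using lip[OF ac(1) z near(1) i] lip[OF ac(2) z near(2) i] by simp_all
    ultimately show ?thesis
      using near i \<open>a i \<le> f a i\<close> by (intro fixpoint_defect_le[of "a i" "f a i" "f c i" "c i"]) auto
  qed
  with z show ?thesis by (auto simp: add_divide_distrib)
qed

text \<open>Brouwer's theorem for the cube indexed by a finite set; the library version needs a
  \<open>euclidean_space\<close> type, whose dimension cannot depend on \<open>N\<close>.\<close>

theorem unit_cube_fixpoint:
  fixes f :: "('a \<Rightarrow> real) \<Rightarrow> 'a \<Rightarrow> real"
  assumes "finite N" and "0 \<le> L"
    and into: "\<And>z. z \<in> unit_cube N \<Longrightarrow> \<forall>i\<in>N. 0 \<le> f z i \<and> f z i \<le> 1"
    and lip: "\<And>z w \<delta> i. z \<in> unit_cube N \<Longrightarrow> w \<in> unit_cube N \<Longrightarrow>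
                (\<forall>j\<in>N. \<bar>z j - w j\<bar> \<le> \<delta>) \<Longrightarrow> i \<in> N \<Longrightarrow> \<bar>f z i - f w i\<bar> \<le> L * \<delta>"
  obtains z where "z \<in> unit_cube N" and "\<forall>i\<in>N. f z i = z i"
proof (rule ccontr)
  assume no_fixpoint: "\<not> thesis"
  define defect where "defect z = (\<Sum>i\<in>N. \<bar>f z i - z i\<bar>)" for z
  have "continuous_on (unit_cube N) (\<lambda>z. f z i)" if "i \<in> N" for i
    using lip that by (intro continuous_on_coordinatewise_lipschitz[OF \<open>finite N\<close> \<open>0 \<le> L\<close>]) blast
  then have "continuous_on (unit_cube N) defect"
    unfolding defect_def
    by (intro continuous_intros) (auto intro: continuous_on_subset[OF continuous_on_product_coordinates])
  moreover have "\<not> (\<exists>z\<in>unit_cube N. defect z = 0)"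
    using no_fixpoint that by (auto simp: defect_def sum_nonneg_eq_0_iff[OF \<open>finite N\<close>])
  ultimately obtain d where "0 < d" and d: "\<forall>z\<in>unit_cube N. d \<le> norm (defect z)"
    using brouwer_compactness_lemma[OF compact_unit_cube] by blast
  obtain p :: nat where p: "real (card N) * (L + 1) / d < p"
    using reals_Archimedean2 by blast
  moreover have "0 \<le> real (card N) * (L + 1) / d" using \<open>0 < d\<close> \<open>0 \<le> L\<close> by simp
  ultimately have "0 < real p" by linarith
  then have "0 < p" by simp
  have "\<exists>z\<in>unit_cube N. \<forall>i\<in>N. \<bar>f z i - z i\<bar> \<le> (L + 1) / p"
    by (rule approx_fixpoint_unit_cube[OF \<open>finite N\<close> \<open>0 < p\<close> into lip])
  then obtain z where z: "z \<in> unit_cube N" and close: "\<forall>i\<in>N. \<bar>f z i - z i\<bar> \<le> (L + 1) / p"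
    by blast
  have "defect z \<le> real (card N) * ((L + 1) / p)"
    unfolding defect_def using sum_mono[OF close[rule_format]] by simp
  also have "\<dots> < d"
    using p \<open>0 < d\<close> \<open>0 < p\<close> by (simp add: field_simps)
  finally show False using d z by (force simp: defect_def)
qed

text \<open>The least \<open>y v (i + 1) \<ge> 0\<close> allowed by the constraints \<open>y u i - y v (i + 1) + x u v \<le> 1\<close>
  of \<open>\<A>\<close> when depth \<open>i\<close> carries the masses \<open>Y\<close>.\<close>

definition demand :: "'a set \<Rightarrow> ('a \<Rightarrow> 'a \<Rightarrow> real) \<Rightarrow> ('a \<Rightarrow> real) \<Rightarrow> 'a \<Rightarrow> real" where
  "demand N x Y v = Max (insert 0 ((\<lambda>u. Y u + x u v - 1) ` (N - {v})))"

lemma demand_nonneg: "finite N \<Longrightarrow> 0 \<le> demand N x Y v"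
  unfolding demand_def by (rule Max_ge) auto

lemma demand_ge: "finite N \<Longrightarrow> u \<in> N \<Longrightarrow> u \<noteq> v \<Longrightarrow> Y u + x u v - 1 \<le> demand N x Y v"
  unfolding demand_def by (rule Max_ge) auto

lemma demand_le:
  "finite N \<Longrightarrow> 0 \<le> c \<Longrightarrow> (\<And>u. u \<in> N \<Longrightarrow> u \<noteq> v \<Longrightarrow> Y u + x u v - 1 \<le> c) \<Longrightarrow> demand N x Y v \<le> c"
  unfolding demand_def by (subst Max_le_iff) auto

lemma demand_le_sum:
  assumes "finite N"
  shows "demand N x Y v \<le> (\<Sum>u\<in>N - {v}. max 0 (Y u + x u v - 1))"
proof (rule demand_le[OF assms])
  show "0 \<le> (\<Sum>u\<in>N - {v}. max 0 (Y u + x u v - 1))" by (rule sum_nonneg) auto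
  fix u assume "u \<in> N" "u \<noteq> v"
  then have "max 0 (Y u + x u v - 1) \<le> (\<Sum>u\<in>N - {v}. max 0 (Y u + x u v - 1))"
    using assms by (intro member_le_sum) auto
  then show "Y u + x u v - 1 \<le> (\<Sum>u\<in>N - {v}. max 0 (Y u + x u v - 1))" by linarith
qed

lemma demand_lipschitz:
  assumes "finite N" and "0 \<le> \<delta>" and "\<forall>u\<in>N. \<bar>Y u - Y' u\<bar> \<le> \<delta>"
  shows "\<bar>demand N x Y v - demand N x Y' v\<bar> \<le> \<delta>"
proof -
  have "demand N x Y v \<le> demand N x Y' v + \<delta>" if "\<forall>u\<in>N. \<bar>Y u - Y' u\<bar> \<le> \<delta>" for Y Y'
  proof (rule demand_le[OF \<open>finite N\<close>])
    show "0 \<le> demand N x Y' v + \<delta>" using demand_nonneg[OF \<open>finite N\<close>] \<open>0 \<le> \<delta>\<close> by (simp add: add_nonneg_nonneg)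
    fix u assume "u \<in> N" "u \<noteq> v"
    then show "Y u + x u v - 1 \<le> demand N x Y' v + \<delta>"
      using demand_ge[OF \<open>finite N\<close>, of u v Y' x] that by fastforce
  qed
  from this[OF assms(3)] this[of Y' Y] assms(3) show ?thesis by (auto simp: abs_minus_commute)
qed

lemma sum_pos_part_le:
  fixes a :: "'i \<Rightarrow> real"
  assumes "finite I" and "\<And>k. k \<in> I \<Longrightarrow> 0 \<le> a k" and "0 \<le> s"
  shows "(\<Sum>k\<in>I. max 0 (a k - s)) \<le> max 0 (sum a I - s)"
proof -
  define J where "J = {k\<in>I. s < a k}"
  have "J \<subseteq> I" "finite J" using \<open>finite I\<close> by (auto simp: J_def)
  have "(\<Sum>k\<in>I. max 0 (a k - s)) = (\<Sum>k\<in>J. a k - s)"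
    using \<open>finite I\<close> by (auto simp: J_def intro!: sum.mono_neutral_cong_right)
  also have "\<dots> \<le> max 0 (sum a I - s)"
  proof (cases "J = {}")
    case False
    then have "s \<le> real (card J) * s"
      using \<open>finite J\<close> \<open>0 \<le> s\<close> by (simp add: Suc_le_eq card_gt_0_iff mult_le_cancel_right1)
    moreover have "sum a J \<le> sum a I"
      using \<open>finite I\<close> \<open>J \<subseteq> I\<close> assms(2) by (intro sum_mono2) auto
    ultimately show ?thesis by (simp add: sum_subtractf)
  qed simp
  finally show ?thesis .
qed

text \<open>\<open>greedy N x z k = (layer k, filled k)\<close>: layer 0 is the seed \<open>z\<close> placed at depth 1, and
  layer \<open>k + 1\<close> is the demand of layer \<open>k\<close>, cut off so that the mass \<open>filled k\<close> of the layers
  \<open>1, \<dots>, k\<close> never exceeds 1.\<close>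

primrec greedy :: "'a set \<Rightarrow> ('a \<Rightarrow> 'a \<Rightarrow> real) \<Rightarrow> ('a \<Rightarrow> real) \<Rightarrow> nat \<Rightarrow> ('a \<Rightarrow> real) \<times> ('a \<Rightarrow> real)"
where
  "greedy N x z 0 = (z, \<lambda>v. 0)"
| "greedy N x z (Suc k) =
    ((\<lambda>v. min 1 (snd (greedy N x z k) v + demand N x (fst (greedy N x z k)) v) - snd (greedy N x z k) v),
     (\<lambda>v. min 1 (snd (greedy N x z k) v + demand N x (fst (greedy N x z k)) v)))"

abbreviation layer where "layer N x z k \<equiv> fst (greedy N x z k)"
abbreviation filled where "filled N x z k \<equiv> snd (greedy N x z k)"

context
  fixes N :: "'a set" and x :: "'a \<Rightarrow> 'a \<Rightarrow> real"
  assumes finite: "finite N"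
begin

lemma filled_bounds: "0 \<le> filled N x z k v \<and> filled N x z k v \<le> 1"
  by (induction k) (use demand_nonneg[OF finite] in \<open>auto simp: min_def\<close>)

lemma filled_le_Suc: "filled N x z k v \<le> filled N x z (Suc k) v"
  using filled_bounds[of z k v] demand_nonneg[OF finite, of x "layer N x z k" v] by simp

lemma layer_Suc_nonneg: "0 \<le> layer N x z (Suc k) v"
  using filled_le_Suc[of z k v] by simp

lemma layer_Suc_le_demand: "layer N x z (Suc k) v \<le> demand N x (layer N x z k) v"
  by simp

lemma sum_layers: "(\<Sum>k<Suc m. layer N x z k v) = z v + filled N x z m v"
  by (induction m) simp_all

lemma greedy_lipschitz:
  assumes "0 \<le> \<delta>" and "\<forall>u\<in>N. \<bar>z u - w u\<bar> \<le> \<delta>" and "v \<in> N"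
  shows "\<bar>layer N x z k v - layer N x w k v\<bar> \<le> 3 ^ k * \<delta> \<and>
         \<bar>filled N x z k v - filled N x w k v\<bar> \<le> 3 ^ k * \<delta>"
  using \<open>v \<in> N\<close>
proof (induction k arbitrary: v)
  case 0
  then show ?case using assms by simp
next
  case (Suc k)
  let ?Tz = "filled N x z k v" and ?Tw = "filled N x w k v"
  let ?dz = "demand N x (layer N x z k) v" and ?dw = "demand N x (layer N x w k) v"
  have "\<bar>?dz - ?dw\<bar> \<le> 3 ^ k * \<delta>"
    using Suc.IH \<open>0 \<le> \<delta>\<close> by (intro demand_lipschitz[OF finite]) auto
  moreover have "\<bar>?Tz - ?Tw\<bar> \<le> 3 ^ k * \<delta>" using Suc by blast
  ultimately have "\<bar>min 1 (?Tz + ?dz) - min 1 (?Tw + ?dw)\<bar> \<le> 2 * 3 ^ k * \<delta>"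
    using \<open>0 \<le> \<delta>\<close> by (simp add: min_def abs_le_iff)
  with \<open>\<bar>?Tz - ?Tw\<bar> \<le> 3 ^ k * \<delta>\<close> show ?case
    by (simp add: abs_le_iff)
qed

lemma layer_le_supersolution:
  assumes "\<forall>v\<in>N. z v \<le> W 0 v"
    and "\<And>k v. k < m \<Longrightarrow> v \<in> N \<Longrightarrow> 0 \<le> W (Suc k) v"
    and "\<And>k u v. k < m \<Longrightarrow> u \<in> N \<Longrightarrow> v \<in> N \<Longrightarrow> u \<noteq> v \<Longrightarrow> W k u + x u v - 1 \<le> W (Suc k) v"
    and "k \<le> m" and "v \<in> N"
  shows "layer N x z k v \<le> W k v"
  using \<open>k \<le> m\<close> \<open>v \<in> N\<close>
proof (induction k arbitrary: v)
  case 0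
  then show ?case using assms(1) by simp
next
  case (Suc k)
  have "demand N x (layer N x z k) v \<le> W (Suc k) v"
  proof (rule demand_le[OF finite])
    show "0 \<le> W (Suc k) v" using Suc.prems assms(2) by simp
    fix u assume "u \<in> N" "u \<noteq> v"
    then have "layer N x z k u \<le> W k u" and "W k u + x u v - 1 \<le> W (Suc k) v"
      using Suc assms(3) by auto
    then show "layer N x z k u + x u v - 1 \<le> W (Suc k) v" by linarith
  qed
  then show ?case using layer_Suc_le_demand[of z k v] by linarith
qed

lemma greedy_fixpoint_exists: "\<exists>z\<in>unit_cube N. \<forall>v\<in>N. z v + filled N x z h v = 1"
proof -
  obtain z where "z \<in> unit_cube N" "\<forall>v\<in>N. 1 - filled N x z h v = z v"
  proof (rule unit_cube_fixpoint[OF finite, where f = "\<lambda>z v. 1 - filled N x z h v" and L = "3 ^ h"])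
    show "\<forall>v\<in>N. 0 \<le> 1 - filled N x z h v \<and> 1 - filled N x z h v \<le> 1" for z
      using filled_bounds by simp
    show "\<bar>(1 - filled N x z h v) - (1 - filled N x w h v)\<bar> \<le> 3 ^ h * \<delta>"
      if "\<forall>u\<in>N. \<bar>z u - w u\<bar> \<le> \<delta>" and "v \<in> N" for z w \<delta> v
    proof -
      have "0 \<le> \<delta>" using that by force
      then show ?thesis using greedy_lipschitz[OF _ that] by (simp add: abs_minus_commute)
    qed
  qed simp
  then show ?thesis by force
qed

end

context
  fixes N :: "'a set" and x :: "'a \<Rightarrow> 'a \<Rightarrow> real" and z :: "'a \<Rightarrow> real" and h :: nat
  assumes finite: "finite N"
    and x_bounds: "\<And>u v. u \<in> N \<Longrightarrow> v \<in> N \<Longrightarrow> u \<noteq> v \<Longrightarrow> 0 \<le> x u v \<and> x u v \<le> 1"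
    and in_sum_le_1: "\<And>v. v \<in> N \<Longrightarrow> (\<Sum>u\<in>N - {v}. x u v) \<le> 1"
    and seed: "z \<in> unit_cube N"
    and fixpoint: "\<And>v. v \<in> N \<Longrightarrow> z v + filled N x z h v = 1"
begin

lemma layer_nonneg: "v \<in> N \<Longrightarrow> 0 \<le> layer N x z k v"
  using seed layer_Suc_nonneg[OF finite] by (cases k) (auto simp: unit_cube_def)

lemma sum_layers_eq_1: "v \<in> N \<Longrightarrow> (\<Sum>k<Suc h. layer N x z k v) = 1"
  using sum_layers[OF finite] fixpoint by simp

lemma demand_sum_le_in_sum:
  assumes "v \<in> N"
  shows "(\<Sum>k<h. demand N x (layer N x z k) v) \<le> (\<Sum>u\<in>N - {v}. x u v)"
proof -
  have "(\<Sum>k<h. demand N x (layer N x z k) v) \<le> (\<Sum>k<h. \<Sum>u\<in>N - {v}. max 0 (layer N x z k u + x u v - 1))"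
    by (intro sum_mono demand_le_sum[OF finite])
  also have "\<dots> = (\<Sum>u\<in>N - {v}. \<Sum>k<h. max 0 (layer N x z k u - (1 - x u v)))"
    by (subst sum.swap) (simp add: algebra_simps)
  also have "\<dots> \<le> (\<Sum>u\<in>N - {v}. x u v)"
  proof (rule sum_mono)
    fix u assume u: "u \<in> N - {v}"
    have "(\<Sum>k<h. layer N x z k u) \<le> (\<Sum>k<Suc h. layer N x z k u)"
      using u layer_nonneg by (intro sum_mono2) auto
    also have "\<dots> = 1" using sum_layers_eq_1 u by blast
    finally have "(\<Sum>k<h. layer N x z k u) \<le> 1" .
    moreover have "0 \<le> x u v" "x u v \<le> 1" using x_bounds u assms by auto
    moreover have "(\<Sum>k<h. max 0 (layer N x z k u - (1 - x u v))) \<le> max 0 ((\<Sum>k<h. layer N x z k u) - (1 - x u v))"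
      using u layer_nonneg \<open>x u v \<le> 1\<close> by (intro sum_pos_part_le) auto
    ultimately show "(\<Sum>k<h. max 0 (layer N x z k u - (1 - x u v))) \<le> x u v" by linarith
  qed
  finally show ?thesis .
qed

text \<open>At a fixed point the cap at 1 in \<open>greedy\<close> is never reached.\<close>

lemma filled_eq_demand_sum:
  assumes "v \<in> N" and "m \<le> h"
  shows "filled N x z m v = (\<Sum>k<m. demand N x (layer N x z k) v)"
  using \<open>m \<le> h\<close>
proof (induction m)
  case 0
  then show ?case by simp
next
  case (Suc m)
  have "(\<Sum>k<Suc m. demand N x (layer N x z k) v) \<le> (\<Sum>k<h. demand N x (layer N x z k) v)"
    using Suc.prems demand_nonneg[OF finite] by (intro sum_mono2) auto
  also have "\<dots> \<le> 1"
    using demand_sum_le_in_sum in_sum_le_1 \<open>v \<in> N\<close> by (meson order_trans)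
  finally show ?case using Suc by (simp add: min_def)
qed

lemma layer_Suc_eq_demand:
  "v \<in> N \<Longrightarrow> m < h \<Longrightarrow> layer N x z (Suc m) v = demand N x (layer N x z m) v"
  using filled_eq_demand_sum[of v m] filled_eq_demand_sum[of v "Suc m"] by simp

lemma seed_ge: "v \<in> N \<Longrightarrow> 1 - (\<Sum>u\<in>N - {v}. x u v) \<le> z v"
  using fixpoint filled_eq_demand_sum[of v h] demand_sum_le_in_sum[of v] by fastforce

end

definition layered_assignment :: "'a \<Rightarrow> (nat \<Rightarrow> 'a \<Rightarrow> real) \<Rightarrow> 'a \<Rightarrow> nat \<Rightarrow> real" where
  "layered_assignment r Y v i =
     (if v = r then (if i = 0 then 1 else 0) else if i = 0 then 0 else Y (i - 1) v)"

lemma x_cons_bounds: "x_cons V r x \<Longrightarrow> u \<in> V \<Longrightarrow> v \<in> V \<Longrightarrow> u \<noteq> v \<Longrightarrow> 0 \<le> x u v \<and> x u v \<le> 1"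
  by (simp add: x_cons_def)

context
  fixes V :: "'a set" and r :: 'a and H h :: nat and x :: "'a \<Rightarrow> 'a \<Rightarrow> real"
    and Y :: "nat \<Rightarrow> 'a \<Rightarrow> real"
  assumes H: "H = Suc h" and x: "x_cons V r x"
    and no_arc_into_root: "\<And>u. u \<in> V - {r} \<Longrightarrow> x u r = 0"
    and nonneg: "\<And>k v. v \<in> V - {r} \<Longrightarrow> 0 \<le> Y k v"
    and total: "\<And>v. v \<in> V - {r} \<Longrightarrow> (\<Sum>k<H. Y k v) = 1"
    and first: "\<And>v. v \<in> V - {r} \<Longrightarrow> x r v \<le> Y 0 v"
    and step: "\<And>k u v. k < h \<Longrightarrow> u \<in> V - {r} \<Longrightarrow> v \<in> V - {r} \<Longrightarrow> u \<noteq> v \<Longrightarrow>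
                 Y k u + x u v - 1 \<le> Y (Suc k) v"
    and last: "\<And>u v. u \<in> V - {r} \<Longrightarrow> v \<in> V - {r} \<Longrightarrow> u \<noteq> v \<Longrightarrow> Y h u + x u v \<le> 1"
begin

lemma layered_assignment_bounds:
  assumes "v \<in> V" and "i \<le> H"
  shows "0 \<le> layered_assignment r Y v i \<and> layered_assignment r Y v i \<le> 1"
proof -
  have "Y k v \<le> 1" if "v \<in> V - {r}" "k < H" for k
    using member_le_sum[of k "{..<H}" "\<lambda>k. Y k v"] nonneg total that by auto
  then show ?thesis using assms nonneg H by (auto simp: layered_assignment_def)
qed

lemma layered_assignment_arc_le:
  assumes "u \<in> V" "v \<in> V" "u \<noteq> v" "i < H"
  shows "layered_assignment r Y u i - layered_assignment r Y v (i + 1) + x u v \<le> 1"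
proof -
  consider "u = r" | "v = r" "u \<noteq> r" | "i = 0" "u \<noteq> r" "v \<noteq> r"
    | k where "i = Suc k" "k < h" "u \<noteq> r" "v \<noteq> r"
    using \<open>i < H\<close> H by (metis not0_implies_Suc Suc_less_SucD)
  then show ?thesis
  proof cases
    case 1
    have "0 \<le> Y i v" "x r v \<le> Y 0 v" "x r v \<le> 1"
      using 1 assms nonneg first x_cons_bounds[OF x] by auto
    with 1 \<open>u \<noteq> v\<close> show ?thesis by (cases "i = 0") (simp_all add: layered_assignment_def)
  next
    case 2
    then show ?thesis
      using assms layered_assignment_bounds[of u i] no_arc_into_root[of u]
      by (simp add: layered_assignment_def)
  next
    case 3
    then show ?thesis
      using assms x_cons_bounds[OF x assms(1-3)] nonneg[of v 0] by (simp add: layered_assignment_def)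
  next
    case 4
    then show ?thesis using assms step[of k u v] by (simp add: layered_assignment_def)
  qed
qed

lemma layered_assignment_in_poly_A: "(x, layered_assignment r Y) \<in> poly_A V r H"
proof -
  have "(\<Sum>i = 1..H. layered_assignment r Y v i) = 1" if "v \<in> V - {r}" for v
    using that total by (simp add: layered_assignment_def sum.atLeast1_atMost_eq)
  moreover have "layered_assignment r Y u H + x u v \<le> 1" if "u \<in> V" "v \<in> V" "u \<noteq> v" for u v
    using that x_cons_bounds[OF x that] layered_assignment_bounds[of u H] no_arc_into_root[of u] last[of u v] H
    by (cases "v = r") (auto simp: layered_assignment_def)
  ultimately show ?thesis
    using x layered_assignment_bounds layered_assignment_arc_le
    by (auto simp: poly_A_def layered_assignment_def)
qed

end

lemma poly_P_arc_le:
  assumes "(x, l, g) \<in> poly_P V r H" and "u \<in> V" "v \<in> V - {r}" "u \<noteq> v"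
  shows "i < H \<Longrightarrow> x u v \<le> l u i + 1 - l v (i + 1)"
    and "x u v \<le> l u H"
proof -
  from assms(1) have cover: "\<forall>u\<in>V. \<forall>v\<in>V. u \<noteq> v \<longrightarrow> (\<forall>i\<le>H. x u v \<le> l u i + g i v)"
    and link: "\<forall>v\<in>V. \<forall>i<H. g i v + l v (i + 1) = 1"
    and last: "\<forall>v\<in>V - {r}. g H v = 0"
    by (simp_all add: poly_P_def)
  show "x u v \<le> l u i + 1 - l v (i + 1)" if "i < H"
  proof -
    have "x u v \<le> l u i + g i v" using cover assms(2-4) that by simp
    moreover have "g i v + l v (i + 1) = 1" using link assms(3) that by simp
    ultimately show ?thesis by linarith
  qed
  have "\<forall>i\<le>H. x u v \<le> l u i + g i v" using cover assms(2-4) by blast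
  then have "x u v \<le> l u H + g H v" by blast
  then show "x u v \<le> l u H" using last assms(3) by simp
qed

lemma poly_P_no_arc_into_root:
  assumes "(x, l, g) \<in> poly_P V r H" and "r \<in> V" "1 \<le> H" "u \<in> V - {r}"
  shows "x u r = 0"
proof -
  from assms(1) have cover: "\<forall>u\<in>V. \<forall>v\<in>V. u \<noteq> v \<longrightarrow> (\<forall>i\<le>H. x u v \<le> l u i + g i v)"
    and "g 0 r = 0" and mono: "\<forall>v\<in>V. \<forall>i<H. l v i \<le> l v (i + 1)" and "\<forall>v\<in>V - {r}. l v 1 = 0"
    and "x_cons V r x"
    by (simp_all add: poly_P_def)
  have "\<forall>i\<le>H. x u r \<le> l u i + g i r" using cover assms(2,4) by blast
  then have "x u r \<le> l u 0 + g 0 r" by simp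
  moreover have "l u 0 \<le> l u 1" using mono assms(3,4) by simp
  moreover have "0 \<le> x u r" using x_cons_bounds[OF \<open>x_cons V r x\<close>] assms(2,4) by simp
  ultimately show ?thesis using \<open>g 0 r = 0\<close> \<open>\<forall>v\<in>V - {r}. l v 1 = 0\<close> assms(4) by simp
qed

lemma x_cons_in_sum_split:
  assumes "x_cons V r x" and "finite V" and "r \<in> V" and "v \<in> V - {r}"
  shows "x r v + (\<Sum>u\<in>V - {r} - {v}. x u v) \<le> 1"
proof -
  have "V - {v} = insert r (V - {r} - {v})" using assms(3,4) by auto
  then have "(\<Sum>u\<in>V - {v}. x u v) = x r v + (\<Sum>u\<in>V - {r} - {v}. x u v)"
    using \<open>finite V\<close> by simp
  moreover have "(\<Sum>u\<in>V - {v}. x u v) \<le> 1" using assms(1,4) unfolding x_cons_def by blast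
  ultimately show ?thesis by simp
qed

lemma poly_P_tails_dominate_layers:
  assumes P: "(x, l, g) \<in> poly_P V r (Suc h)" and "finite V"
    and "z \<in> unit_cube (V - {r})" and "u \<in> V - {r}"
  shows "layer (V - {r}) x z h u \<le> 1 - l u (Suc h)"
proof (rule layer_le_supersolution[where W = "\<lambda>k v. 1 - l v (Suc k)" and m = h])
  show "\<forall>v\<in>V - {r}. z v \<le> 1 - l v (Suc 0)"
    using assms(3) P by (auto simp: unit_cube_def poly_P_def)
  show "0 \<le> 1 - l v (Suc (Suc k))" if "k < h" "v \<in> V - {r}" for k v
    using P that by (auto simp: poly_P_def)
  show "1 - l u (Suc k) + x u v - 1 \<le> 1 - l v (Suc (Suc k))"
    if "k < h" "u \<in> V - {r}" "v \<in> V - {r}" "u \<noteq> v" for k u v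
    using poly_P_arc_le(1)[OF P, of u v "Suc k"] that by simp
qed (use assms in simp_all)

theorem poly_P_imp_poly_A:
  assumes "finite V" and "r \<in> V" and "1 \<le> H" and P: "(x, l, g) \<in> poly_P V r H"
  shows "\<exists>y. (x, y) \<in> poly_A V r H"
proof -
  define N where "N = V - {r}"
  obtain h where H: "H = Suc h" using \<open>1 \<le> H\<close> by (cases H) auto
  have "finite N" using \<open>finite V\<close> by (simp add: N_def)
  have x: "x_cons V r x" using P by (simp add: poly_P_def)
  have x_bounds: "0 \<le> x u v \<and> x u v \<le> 1" if "u \<in> N" "v \<in> N" "u \<noteq> v" for u v
    using x_cons_bounds[OF x] that by (simp add: N_def)
  have in_sum: "x r v + (\<Sum>u\<in>N - {v}. x u v) \<le> 1" if "v \<in> N" for v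
    using x_cons_in_sum_split[OF x \<open>finite V\<close> \<open>r \<in> V\<close>] that by (simp add: N_def)
  then have in_sum_le_1: "(\<Sum>u\<in>N - {v}. x u v) \<le> 1" if "v \<in> N" for v
    using x_cons_bounds[OF x \<open>r \<in> V\<close>, of v] that by (fastforce simp: N_def)
  obtain z where seed: "z \<in> unit_cube N" and fixpoint: "\<forall>v\<in>N. z v + filled N x z h v = 1"
    using greedy_fixpoint_exists[OF \<open>finite N\<close>] by blast
  note greedy = \<open>finite N\<close> x_bounds in_sum_le_1 seed fixpoint[rule_format]
  have "(x, layered_assignment r (layer N x z)) \<in> poly_A V r H"
  proof (rule layered_assignment_in_poly_A[OF H x])
    show "x u r = 0" if "u \<in> V - {r}" for u
      by (rule poly_P_no_arc_into_root[OF P \<open>r \<in> V\<close> \<open>1 \<le> H\<close> that])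
    show "0 \<le> layer N x z k v" if "v \<in> V - {r}" for k v
      using layer_nonneg[OF greedy] that by (simp add: N_def)
    show "(\<Sum>k<H. layer N x z k v) = 1" if "v \<in> V - {r}" for v
      using sum_layers_eq_1[OF greedy] that H by (simp add: N_def)
    show "x r v \<le> layer N x z 0 v" if "v \<in> V - {r}" for v
      using seed_ge[OF greedy] in_sum that by (fastforce simp: N_def)
    show "layer N x z k u + x u v - 1 \<le> layer N x z (Suc k) v"
      if "k < h" "u \<in> V - {r}" "v \<in> V - {r}" "u \<noteq> v" for k u v
      using layer_Suc_eq_demand[OF greedy] demand_ge[OF \<open>finite N\<close>] that by (simp add: N_def)
    show "layer N x z h u + x u v \<le> 1" if "u \<in> V - {r}" "v \<in> V - {r}" "u \<noteq> v" for u v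
      using poly_P_tails_dominate_layers[of x l g V r h z u] poly_P_arc_le(2)[OF P, of u v]
        P seed \<open>finite V\<close> that H by (simp add: N_def)
  qed
  then show ?thesis by blast
qed

theorem corollary1:
  fixes V :: "'a set" and r :: 'a and H :: nat
    and c :: "'a \<Rightarrow> 'a \<Rightarrow> real"
    and C :: "(('a \<Rightarrow> 'a \<Rightarrow> real) \<times> real) set"
  assumes "finite V" and "r \<in> V" and "H \<ge> 1" and "finite C"
  shows "lp_min_P V r H c C \<ge> lp_min_A V r H c C \<and>
         lp_max_P V r H c C \<le> lp_max_A V r H c C"
proof -
  have proj: "\<exists>q\<in>{q \<in> poly_A V r H. sat_C V C (fst q)}. fst q = fst p"
    if "p \<in> {p \<in> poly_P V r H. sat_C V C (fst p)}" for p
  proof -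
    obtain x l g where "p = (x, l, g)" by (cases p)
    with that have "(x, l, g) \<in> poly_P V r H" by simp
    then obtain y where "(x, y) \<in> poly_A V r H"
      using poly_P_imp_poly_A[OF assms(1-3)] by blast
    then show ?thesis using \<open>p = (x, l, g)\<close> that by force
  qed
  show ?thesis
    unfolding lp_min_P_def lp_min_A_def lp_max_P_def lp_max_A_def
    by (intro conjI INF_mono SUP_mono) (use proj in \<open>fastforce+\<close>)
qed

end
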